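(* Let $G$ be a cop-win graph of corner rank $\alpha$. Every vertex of corner rank $k>1$ has at least one neighbor of corner rank $k-1$. In particular, if for some $k<\alpha$ there is exactly one vertex $v$ of corner rank $k$, then $v$ is adjacent to every vertex of corner rank $k+1$.
   Context: All graphs are finite, nonempty, and reflexive (every vertex has a loop). $N[v]$ is the closed neighborhood of $v$ (including $v$). For distinct $v,w$, $w$ strictly corners $v$ if $N[v]\subsetneq N[w]$; $v$ is then a strict corner. Corner ranking: set $G^{(1)}=G$, $k=1$. If $G^{(k)}$ is a clique, give all its vertices rank $k$ and stop. Else if $G^{(k)}$ has no strict corners, give all its vertices rank $\infty$ and stop. Else give every strict corner of $G^{(k)}$ rank $k$, delete them to get $G^{(k+1)}$ (induced subgraph), increase $k$ and repeat. The corner rank of $G$ is the largest rank of a vertex; cop-win graphs are exactly those of finite corner rank. Standing assumption: $\alpha\ge 2$. *)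

theory Defs
  imports Main
begin

text \<open>A finite reflexive graph is given by a finite nonempty vertex set V and a
symmetric adjacency relation E that has a loop at every vertex.  Only edges
between vertices of V matter.\<close>

definition refl_graph :: "'a set \<Rightarrow> ('a \<Rightarrow> 'a \<Rightarrow> bool) \<Rightarrow> bool" where
  "refl_graph V E \<longleftrightarrow> finite V \<and> V \<noteq> {} \<and> (\<forall>v\<in>V. E v v) \<and>
     (\<forall>v\<in>V. \<forall>w\<in>V. E v w \<longrightarrow> E w v)"

definition cnbhd :: "('a \<Rightarrow> 'a \<Rightarrow> bool) \<Rightarrow> 'a set \<Rightarrow> 'a \<Rightarrow> 'a set" where
  "cnbhd E S v = {w \<in> S. E v w}"

definition is_clique :: "('a \<Rightarrow> 'a \<Rightarrow> bool) \<Rightarrow> 'a set \<Rightarrow> bool" where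
  "is_clique E S \<longleftrightarrow> (\<forall>v\<in>S. \<forall>w\<in>S. E v w)"

definition strict_corners :: "('a \<Rightarrow> 'a \<Rightarrow> bool) \<Rightarrow> 'a set \<Rightarrow> 'a set" where
  "strict_corners E S = {v \<in> S. \<exists>w\<in>S. w \<noteq> v \<and> cnbhd E S v \<subset> cnbhd E S w}"

text \<open>stage V E k is the vertex set of G^(k+1) (empty once the process has stopped
at a clique; constant once it has stopped with no strict corners).\<close>
fun stage :: "'a set \<Rightarrow> ('a \<Rightarrow> 'a \<Rightarrow> bool) \<Rightarrow> nat \<Rightarrow> 'a set" where
  "stage V E 0 = V"
| "stage V E (Suc k) =
     (let S = stage V E k in if is_clique E S then {} else S - strict_corners E S)"

definition gets_rank :: "'a set \<Rightarrow> ('a \<Rightarrow> 'a \<Rightarrow> bool) \<Rightarrow> 'a \<Rightarrow> nat \<Rightarrow> bool" where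
  "gets_rank V E v k \<longleftrightarrow> k \<ge> 1 \<and> v \<in> stage V E (k - 1) \<and>
     (is_clique E (stage V E (k - 1)) \<or> v \<in> strict_corners E (stage V E (k - 1)))"

text \<open>Corner rank of a vertex: Some k if finite, None for rank \<infinity>.\<close>
definition corner_rank :: "'a set \<Rightarrow> ('a \<Rightarrow> 'a \<Rightarrow> bool) \<Rightarrow> 'a \<Rightarrow> nat option" where
  "corner_rank V E v =
     (if \<exists>k. gets_rank V E v k then Some (LEAST k. gets_rank V E v k) else None)"

definition cop_win :: "'a set \<Rightarrow> ('a \<Rightarrow> 'a \<Rightarrow> bool) \<Rightarrow> bool" where
  "cop_win V E \<longleftrightarrow> (\<forall>v\<in>V. corner_rank V E v \<noteq> None)"

definition graph_corner_rank :: "'a set \<Rightarrow> ('a \<Rightarrow> 'a \<Rightarrow> bool) \<Rightarrow> nat" where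
  "graph_corner_rank V E = Max ((\<lambda>v. the (corner_rank V E v)) ` V)"

end

theory Submission
  imports Defs
begin

text \<open>A vertex v of rank k > 1 survives into the stage C obtained from the previous stage S by
deleting the strict corners of S.  If no neighbour of v were a strict corner of S, then v would
have the same closed neighbourhood in S as in C; so a vertex dominating v in C would also
dominate it in S, and if C is a clique, a strict corner u of S would be dominated by a
non-corner w of S, i.e. by a vertex of C, forcing N[w] = C and hence u \<in> C.  Either way v
would itself be a strict corner of S.  The second claim follows: a vertex of rank k + 1 has a
neighbour of rank k, which must be the unique one.\<close>

lemma strict_cornersI:
  "\<lbrakk>v \<in> S; w \<in> S; cnbhd E S v \<subset> cnbhd E S w\<rbrakk> \<Longrightarrow> v \<in> strict_corners E S"
  unfolding strict_corners_def by auto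

lemma strict_corner_dominated_by_non_corner:
  assumes "finite S" and "u \<in> strict_corners E S"
  shows "\<exists>w \<in> S - strict_corners E S. cnbhd E S u \<subset> cnbhd E S w"
proof -
  define D where "D = cnbhd E S ` {w \<in> S. cnbhd E S u \<subset> cnbhd E S w}"
  have "finite D"
    using assms(1) unfolding D_def by simp
  moreover have "D \<noteq> {}"
    using assms(2) unfolding D_def strict_corners_def by blast
  ultimately obtain N where "N \<in> D" and maximal: "\<forall>N' \<in> D. N \<le> N' \<longrightarrow> N = N'"
    using finite_has_maximal by blast
  then obtain w where w: "w \<in> S" "cnbhd E S u \<subset> cnbhd E S w" "N = cnbhd E S w"
    unfolding D_def by blast
  have "w \<notin> strict_corners E S"
  proof
    assume "w \<in> strict_corners E S"
    then obtain w' where "w' \<in> S" "cnbhd E S w \<subset> cnbhd E S w'"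
      unfolding strict_corners_def by blast
    moreover from this w have "cnbhd E S w' \<in> D"
      unfolding D_def by auto
    ultimately show False
      using maximal w(3) by auto
  qed
  with w show ?thesis by blast
qed

lemma survivor_adjacent_to_strict_corner:
  assumes "finite S" and refl: "\<forall>x\<in>S. E x x" and "\<not> is_clique E S"
    and C_def: "C = S - strict_corners E S"
    and "v \<in> C" and v_ranked: "is_clique E C \<or> v \<in> strict_corners E C"
  shows "\<exists>x \<in> strict_corners E S. E v x"
proof (rule ccontr)
  assume no_corner_nbr: "\<not> ?thesis"
  have "C \<subseteq> S" using C_def by blast
  have N_v: "cnbhd E S v = cnbhd E C v"
    using no_corner_nbr C_def unfolding cnbhd_def by blast
  have v_not_corner: "v \<notin> strict_corners E S"
    using \<open>v \<in> C\<close> C_def by blast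
  from v_ranked show False
  proof
    assume C_clique: "is_clique E C"
    with \<open>\<not> is_clique E S\<close> have "S \<noteq> C" by auto
    then obtain u where "u \<in> S" "u \<notin> C"
      using \<open>C \<subseteq> S\<close> by blast
    then have u: "u \<in> strict_corners E S" "u \<in> S"
      using C_def by blast+
    then obtain w where w: "w \<in> C" "cnbhd E S u \<subset> cnbhd E S w"
      using strict_corner_dominated_by_non_corner[OF \<open>finite S\<close>] C_def by blast
    have "cnbhd E S v = C"
      using N_v C_clique \<open>v \<in> C\<close> unfolding cnbhd_def is_clique_def by auto
    moreover have "C \<subseteq> cnbhd E S w"
      using C_clique \<open>w \<in> C\<close> \<open>C \<subseteq> S\<close> unfolding cnbhd_def is_clique_def by auto
    moreover have "\<not> cnbhd E S v \<subset> cnbhd E S w"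
      using v_not_corner strict_cornersI \<open>v \<in> C\<close> \<open>w \<in> C\<close> \<open>C \<subseteq> S\<close> by (meson subsetD)
    ultimately have "cnbhd E S w = C"
      by (simp add: psubset_eq)
    moreover have "u \<in> cnbhd E S w"
      using w refl u unfolding cnbhd_def by auto
    ultimately show False
      using u C_def by simp
  next
    assume "v \<in> strict_corners E C"
    then obtain w where "w \<in> C" "cnbhd E C v \<subset> cnbhd E C w"
      unfolding strict_corners_def by blast
    moreover have "cnbhd E C w \<subseteq> cnbhd E S w"
      using \<open>C \<subseteq> S\<close> unfolding cnbhd_def by blast
    ultimately have "v \<in> strict_corners E S"
      using N_v \<open>v \<in> C\<close> \<open>C \<subseteq> S\<close> by (intro strict_cornersI[of v S w]) auto
    with v_not_corner show False ..
  qed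
qed

lemma stage_subset: "stage V E k \<subseteq> V"
  by (induction k) (auto simp: Let_def)

lemma stage_Suc_subset: "stage V E (Suc k) \<subseteq> stage V E k"
  by (auto simp: Let_def)

lemma stage_antimono: "j \<le> k \<Longrightarrow> stage V E k \<subseteq> stage V E j"
  by (induction k rule: dec_induct) (simp, metis stage_Suc_subset order_trans)

lemma stage_Suc_nonempty:
  assumes "stage V E (Suc k) \<noteq> {}"
  shows "\<not> is_clique E (stage V E k)"
    and "stage V E (Suc k) = stage V E k - strict_corners E (stage V E k)"
  using assms by (simp_all add: Let_def split: if_splits)

lemma gets_rank_not_in_stage: "gets_rank V E v k \<Longrightarrow> v \<notin> stage V E k"
  unfolding gets_rank_def by (cases k) (auto simp: Let_def)

lemma gets_rank_in_vertices: "gets_rank V E v k \<Longrightarrow> v \<in> V"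
  unfolding gets_rank_def using stage_subset[of V E "k - 1"] by blast

lemma gets_rank_unique:
  assumes "gets_rank V E v j" and "gets_rank V E v k"
  shows "j = k"
proof -
  have no_later_rank: "\<not> (i < l)" if "gets_rank V E v i" "gets_rank V E v l" for i l
  proof
    assume "i < l"
    then have "stage V E (l - 1) \<subseteq> stage V E i" by (intro stage_antimono) auto
    with that(2) have "v \<in> stage V E i" unfolding gets_rank_def by blast
    with gets_rank_not_in_stage[OF that(1)] show False by contradiction
  qed
  from no_later_rank[OF assms] no_later_rank[OF assms(2,1)] show ?thesis by simp
qed

lemma corner_rank_eq_Some_iff: "corner_rank V E v = Some k \<longleftrightarrow> gets_rank V E v k"
proof
  assume rank: "corner_rank V E v = Some k"
  then have ranked: "\<exists>k. gets_rank V E v k"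
    unfolding corner_rank_def by (auto split: if_splits)
  with rank have "k = (LEAST k. gets_rank V E v k)"
    unfolding corner_rank_def by auto
  with LeastI_ex[OF ranked] show "gets_rank V E v k" by simp
next
  assume "gets_rank V E v k"
  moreover from this have "(LEAST k. gets_rank V E v k) = k"
    by (intro Least_equality) (auto dest: gets_rank_unique)
  ultimately show "corner_rank V E v = Some k"
    unfolding corner_rank_def by auto
qed

lemma gets_rank_Suc_has_lower_neighbour:
  assumes "refl_graph V E" and "gets_rank V E v (Suc (Suc m))"
  shows "\<exists>w. E v w \<and> gets_rank V E w (Suc m)"
proof -
  let ?S = "stage V E m"
  have "v \<in> stage V E (Suc m)"
    using assms(2) unfolding gets_rank_def by simp
  then have "\<not> is_clique E ?S" and C: "stage V E (Suc m) = ?S - strict_corners E ?S"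
    using stage_Suc_nonempty[of V E m] by blast+
  moreover have "finite ?S" "\<forall>x \<in> ?S. E x x"
    using assms(1) stage_subset[of V E m] finite_subset unfolding refl_graph_def by blast+
  ultimately obtain w where "w \<in> strict_corners E ?S" "E v w"
    using survivor_adjacent_to_strict_corner \<open>v \<in> stage V E (Suc m)\<close> assms(2)
    unfolding gets_rank_def by (metis diff_Suc_1)
  then show ?thesis
    unfolding gets_rank_def strict_corners_def by auto
qed

lemma corner_rank_has_lower_neighbour:
  assumes "refl_graph V E" and "corner_rank V E v = Some k" and "k > 1"
  shows "\<exists>w \<in> V. E v w \<and> corner_rank V E w = Some (k - 1)"
proof -
  obtain m where k: "k = Suc (Suc m)"
    using \<open>k > 1\<close> by (metis less_imp_Suc_add plus_1_eq_Suc)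
  then obtain w where "E v w" "gets_rank V E w (Suc m)"
    using gets_rank_Suc_has_lower_neighbour[OF assms(1)] assms(2)
    by (auto simp: corner_rank_eq_Some_iff)
  with k show ?thesis
    by (auto simp: corner_rank_eq_Some_iff gets_rank_in_vertices)
qed

theorem corollary3p17:
  fixes V :: "'a set" and E :: "'a \<Rightarrow> 'a \<Rightarrow> bool" and \<alpha> :: nat
  assumes "refl_graph V E"
    and "cop_win V E"
    and "graph_corner_rank V E = \<alpha>"
    and "\<alpha> \<ge> 2"
  shows "(\<forall>v\<in>V. \<forall>k. k > 1 \<and> corner_rank V E v = Some k \<longrightarrow>
            (\<exists>w\<in>V. E v w \<and> corner_rank V E w = Some (k - 1)))
       \<and> (\<forall>k v. k < \<alpha> \<and> {u \<in> V. corner_rank V E u = Some k} = {v} \<longrightarrow>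
            (\<forall>u\<in>V. corner_rank V E u = Some (k + 1) \<longrightarrow> E v u))"
proof (intro conjI allI ballI impI)
  fix v k
  assume "v \<in> V" "k > 1 \<and> corner_rank V E v = Some k"
  then show "\<exists>w\<in>V. E v w \<and> corner_rank V E w = Some (k - 1)"
    using corner_rank_has_lower_neighbour[OF assms(1)] by blast
next
  fix k v u
  assume unique: "k < \<alpha> \<and> {u \<in> V. corner_rank V E u = Some k} = {v}"
    and "u \<in> V" and u_rank: "corner_rank V E u = Some (k + 1)"
  have "k \<ge> 1"
    using unique by (auto simp: corner_rank_eq_Some_iff gets_rank_def)
  then obtain w where "w \<in> V" "E u w" "corner_rank V E w = Some k"
    using corner_rank_has_lower_neighbour[OF assms(1) u_rank] by auto
  with unique have "w = v" by blast
  with \<open>E u w\<close> \<open>u \<in> V\<close> \<open>w \<in> V\<close> assms(1) show "E v u"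
    unfolding refl_graph_def by blast
qed

end
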